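(* Let $\mathcal{X}=\{x\in\mathbb{R}^n:\|x\|_2\le1\}$, $\mathcal{Y}=\{1,\dots,|\mathcal{Y}|\}$, $K\ge1$, $N\ge1$ and $\alpha>0$. Consider the neural networks $h_{\mathbf{w}}(x)=W h^K(\cdots h^1(x))+b$ with $W\in\mathbb{R}^{|\mathcal{Y}|\times N}$, $b\in\mathbb{R}^{|\mathcal{Y}|}$, and layers $h^i(u)=\mathrm{proj}(\mathrm{leaky}(W_iu+b_i))$ where $W_1\in\mathbb{R}^{N\times n}$, $W_i\in\mathbb{R}^{N\times N}$ for $i\ge2$, $b_i\in\mathbb{R}^N$; here $\mathrm{leaky}$ is the Leaky ReLU $t\mapsto\max(t,at)$ (with a fixed slope $a\in(0,1)$) applied elementwise and $\mathrm{proj}$ is the Euclidean projection onto the closed unit $\ell_2$-ball of $\mathbb{R}^N$. Let $\mathbf{w}$ denote the vector concatenating all entries of $W,W_K,\dots,W_1,b,b_K,\dots,b_1$. Let the loss be $\ell(h,(x,y))=\frac{1}{|\mathcal{Y}|}\sum_{y'\ne y}\max\big(0,1-\alpha(h(x)[y]-h(x)[y'])\big)$, where $h(x)[y]$ denotes the $y$-th coordinate. Then for all parameter vectors $\mathbf{w},\mathbf{w}'$ such that every weight matrix ($W,W_1,\dots,W_K$ in both) has Frobenius norm at most $1$ (no constraint on biases), and for all $(x,y)\in\mathcal{X}\times\mathcal{Y}$, \[ |\ell(h_{\mathbf{w}},(x,y))-\ell(h_{\mathbf{w}'},(x,y))|\le\alpha\sqrt{2(K+2)}\,\|\mathbf{w}-\mathbf{w}'\|_2.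 \] *)

theory Defs
  imports Complex_Main
begin

text \<open>Conventions: a vector of R^d is a function nat => real, of which only
 the coordinates 1..d are used; a d1 x d2 matrix is a function nat => nat => real
 of which only entries (j,k) with j in 1..d1, k in 1..d2 are used.
 Layer weight matrices and biases are indexed by the layer number i in 1..K.\<close>

definition leaky :: "real \<Rightarrow> real \<Rightarrow> real" where
  "leaky a t = max t (a * t)"

definition vnorm :: "nat \<Rightarrow> (nat \<Rightarrow> real) \<Rightarrow> real" where
  "vnorm d u = sqrt (\<Sum>j=1..d. (u j)^2)"

definition frob :: "nat \<Rightarrow> nat \<Rightarrow> (nat \<Rightarrow> nat \<Rightarrow> real) \<Rightarrow> real" where
  "frob d1 d2 M = sqrt (\<Sum>j=1..d1. \<Sum>k=1..d2. (M j k)^2)"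

definition proj_ball :: "nat \<Rightarrow> (nat \<Rightarrow> real) \<Rightarrow> (nat \<Rightarrow> real)" where
  "proj_ball d u = (if vnorm d u \<le> 1 then u else (\<lambda>j. u j / vnorm d u))"

definition matvec :: "nat \<Rightarrow> (nat \<Rightarrow> nat \<Rightarrow> real) \<Rightarrow> (nat \<Rightarrow> real) \<Rightarrow> (nat \<Rightarrow> real)" where
  "matvec din M u = (\<lambda>j. \<Sum>k=1..din. M j k * u k)"

definition layer :: "real \<Rightarrow> nat \<Rightarrow> nat \<Rightarrow> (nat \<Rightarrow> nat \<Rightarrow> real) \<Rightarrow> (nat \<Rightarrow> real)
                     \<Rightarrow> (nat \<Rightarrow> real) \<Rightarrow> (nat \<Rightarrow> real)" where
  "layer a din N Wi bi u = proj_ball N (\<lambda>j. leaky a (matvec din Wi u j + bi j))"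

definition in_dim :: "nat \<Rightarrow> nat \<Rightarrow> nat \<Rightarrow> nat" where
  "in_dim n N i = (if i = 1 then n else N)"

fun feat :: "real \<Rightarrow> nat \<Rightarrow> nat \<Rightarrow> (nat \<Rightarrow> nat \<Rightarrow> nat \<Rightarrow> real) \<Rightarrow> (nat \<Rightarrow> nat \<Rightarrow> real)
             \<Rightarrow> nat \<Rightarrow> (nat \<Rightarrow> real) \<Rightarrow> (nat \<Rightarrow> real)" where
  "feat a n N Ws bs 0 x = x"
| "feat a n N Ws bs (Suc i) x =
     layer a (in_dim n N (Suc i)) N (Ws (Suc i)) (bs (Suc i)) (feat a n N Ws bs i x)"

definition net :: "real \<Rightarrow> nat \<Rightarrow> nat \<Rightarrow> nat \<Rightarrow> (nat \<Rightarrow> nat \<Rightarrow> real) \<Rightarrow> (nat \<Rightarrow> real)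
                   \<Rightarrow> (nat \<Rightarrow> nat \<Rightarrow> nat \<Rightarrow> real) \<Rightarrow> (nat \<Rightarrow> nat \<Rightarrow> real)
                   \<Rightarrow> (nat \<Rightarrow> real) \<Rightarrow> (nat \<Rightarrow> real)" where
  "net a n N K W b Ws bs x = (\<lambda>j. matvec N W (feat a n N Ws bs K x) j + b j)"

definition loss :: "nat \<Rightarrow> real \<Rightarrow> (nat \<Rightarrow> real) \<Rightarrow> nat \<Rightarrow> real" where
  "loss m \<alpha> hx y = (1 / real m) * (\<Sum>y'\<in>{1..m} - {y}. max 0 (1 - \<alpha> * (hx y - hx y')))"

definition param_dist :: "nat \<Rightarrow> nat \<Rightarrow> nat \<Rightarrow> nat
     \<Rightarrow> (nat \<Rightarrow> nat \<Rightarrow> real) \<Rightarrow> (nat \<Rightarrow> real) \<Rightarrow> (nat \<Rightarrow> nat \<Rightarrow> nat \<Rightarrow> real) \<Rightarrow> (nat \<Rightarrow> nat \<Rightarrow> real)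
     \<Rightarrow> (nat \<Rightarrow> nat \<Rightarrow> real) \<Rightarrow> (nat \<Rightarrow> real) \<Rightarrow> (nat \<Rightarrow> nat \<Rightarrow> nat \<Rightarrow> real) \<Rightarrow> (nat \<Rightarrow> nat \<Rightarrow> real)
     \<Rightarrow> real" where
  "param_dist n N K m W b Ws bs W' b' Ws' bs' = sqrt (
      (\<Sum>j=1..m. \<Sum>k=1..N. (W j k - W' j k)^2)
    + (\<Sum>i=1..K. \<Sum>j=1..N. \<Sum>k=1..in_dim n N i. (Ws i j k - Ws' i j k)^2)
    + (\<Sum>j=1..m. (b j - b' j)^2)
    + (\<Sum>i=1..K. \<Sum>j=1..N. (bs i j - bs' i j)^2))"

end

theory Submission
  imports Defs "HOL-Analysis.L2_Norm"
begin

(*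
  Each layer is an affine map followed by the Leaky ReLU and the projection onto the unit
  ball, and the last two are nonexpansive. Since the input of every layer lies in the unit
  ball and the weight matrices have Frobenius norm at most 1, replacing the parameters
  (W_i, b_i) of a layer by (W_i', b_i') moves its output by at most
  ||W_i - W_i'||_F + ||b_i - b_i'|| plus the distance between its inputs, so these errors
  simply add up along the network. The hinge loss is alpha-Lipschitz in the network output
  for the Euclidean norm (Cauchy-Schwarz against the weights m - 1 at the label and 1
  elsewhere), and Cauchy-Schwarz once more bounds the sum of the 2 (K + 1) parameter
  distances by sqrt (2 (K + 1)) ||w - w'||.

  The projection is u / max 1 ||u||, and
  ||c u - e v||^2 = (c ||u|| - e ||v||)^2 + 2 c e (||u|| ||v|| - <u, v>)
  shows that it is nonexpansive: clipping the norm at 1 is 1-Lipschitz and c e <= 1.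
*)

lemma vnorm_eq_L2_set: "vnorm d u = L2_set u {1..d}"
  by (simp add: vnorm_def L2_set_def)

lemma frob_eq_L2_set_rows: "frob d1 d2 M = L2_set (\<lambda>j. L2_set (M j) {1..d2}) {1..d1}"
  by (simp add: frob_def L2_set_def sum_nonneg)

lemma vnorm_nonneg: "0 \<le> vnorm d u"
  by (simp add: vnorm_eq_L2_set)

lemma frob_nonneg: "0 \<le> frob d1 d2 M"
  by (simp add: frob_eq_L2_set_rows)

lemma vnorm_sq: "(vnorm d u)\<^sup>2 = (\<Sum>j=1..d. (u j)\<^sup>2)"
  by (simp add: vnorm_def sum_nonneg)

lemma frob_sq: "(frob d1 d2 M)\<^sup>2 = (\<Sum>j=1..d1. \<Sum>k=1..d2. (M j k)\<^sup>2)"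
  by (simp add: frob_def sum_nonneg)

lemma vnorm_triangle: "vnorm d (\<lambda>j. u j + v j) \<le> vnorm d u + vnorm d v"
  unfolding vnorm_eq_L2_set by (rule L2_set_triangle_ineq)

lemma vnorm_mono_abs:
  assumes "\<And>j. j \<in> {1..d} \<Longrightarrow> \<bar>u j\<bar> \<le> \<bar>v j\<bar>"
  shows "vnorm d u \<le> vnorm d v"
  unfolding vnorm_def
  by (intro real_sqrt_le_mono sum_mono) (use assms in \<open>simp add: abs_le_square_iff\<close>)

lemma vnorm_scale: "0 \<le> c \<Longrightarrow> vnorm d (\<lambda>j. c * u j) = c * vnorm d u"
  unfolding vnorm_eq_L2_set by (simp add: L2_set_right_distrib)

lemma inner_le_vnorm_mult: "(\<Sum>j=1..d. u j * v j) \<le> vnorm d u * vnorm d v"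
proof -
  have "(\<Sum>j=1..d. u j * v j) \<le> (\<Sum>j=1..d. \<bar>u j\<bar> * \<bar>v j\<bar>)"
    by (intro sum_mono) (metis abs_ge_self abs_mult)
  also have "\<dots> \<le> vnorm d u * vnorm d v"
    unfolding vnorm_eq_L2_set by (rule L2_set_mult_ineq)
  finally show ?thesis .
qed

lemma vnorm_scaled_diff_sq:
  "(vnorm d (\<lambda>j. c * u j - e * v j))\<^sup>2
     = (c * vnorm d u - e * vnorm d v)\<^sup>2
       + 2 * (c * e) * (vnorm d u * vnorm d v - (\<Sum>j=1..d. u j * v j))"
proof -
  have "(\<Sum>j=1..d. (c * u j - e * v j)\<^sup>2)
      = c\<^sup>2 * (\<Sum>j=1..d. (u j)\<^sup>2) + e\<^sup>2 * (\<Sum>j=1..d. (v j)\<^sup>2) - 2 * c * e * (\<Sum>j=1..d. u j * v j)"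
    by (simp add: power2_diff power_mult_distrib sum.distrib sum_subtractf sum_distrib_left algebra_simps)
  then show ?thesis
    by (simp add: vnorm_sq power2_diff power_mult_distrib algebra_simps)
qed

lemma vnorm_scaled_diff_le:
  assumes "\<bar>c * vnorm d u - e * vnorm d v\<bar> \<le> \<bar>vnorm d u - vnorm d v\<bar>" and "c * e \<le> 1"
  shows "vnorm d (\<lambda>j. c * u j - e * v j) \<le> vnorm d (\<lambda>j. u j - v j)"
proof (rule power2_le_imp_le)
  have gap: "0 \<le> vnorm d u * vnorm d v - (\<Sum>j=1..d. u j * v j)"
    using inner_le_vnorm_mult[where d=d and u=u and v=v] by simp
  have "(c * vnorm d u - e * vnorm d v)\<^sup>2 \<le> (vnorm d u - vnorm d v)\<^sup>2"
    using assms(1) by (simp add: abs_le_square_iff)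
  moreover have "2 * (c * e) * (vnorm d u * vnorm d v - (\<Sum>j=1..d. u j * v j))
      \<le> 2 * (vnorm d u * vnorm d v - (\<Sum>j=1..d. u j * v j))"
    using mult_right_mono[OF assms(2) gap] by linarith
  ultimately show "(vnorm d (\<lambda>j. c * u j - e * v j))\<^sup>2 \<le> (vnorm d (\<lambda>j. u j - v j))\<^sup>2"
    using vnorm_scaled_diff_sq[where c=c and e=e] vnorm_scaled_diff_sq[where c=1 and e=1] by simp
qed (rule vnorm_nonneg)

lemma proj_ball_eq_scale: "proj_ball d u = (\<lambda>j. (1 / max 1 (vnorm d u)) * u j)"
  by (auto simp: proj_ball_def max_def)

lemma vnorm_proj_ball_le: "vnorm d (proj_ball d u) \<le> 1"
  unfolding proj_ball_eq_scale by (subst vnorm_scale) (auto simp: vnorm_nonneg)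

lemma proj_ball_nonexpansive:
  "vnorm d (\<lambda>j. proj_ball d u j - proj_ball d v j) \<le> vnorm d (\<lambda>j. u j - v j)"
proof -
  have clip: "r / max 1 r = min r 1" if "0 \<le> r" for r :: real
    using that by (auto simp: max_def min_def)
  have scales: "1 \<le> max 1 r * max 1 s" for r s :: real
    using mult_mono[of 1 "max 1 r" 1 "max 1 s"] by simp
  show ?thesis
    unfolding proj_ball_eq_scale
    by (rule vnorm_scaled_diff_le) (auto simp: clip vnorm_nonneg scales)
qed

lemma abs_max_diff_le: "\<bar>max p q - max p' q'\<bar> \<le> max \<bar>p - p'\<bar> \<bar>q - q'\<bar>"
  for p q p' q' :: real
  by (simp add: max_def abs_if)

lemma leaky_lipschitz:
  assumes "\<bar>a\<bar> \<le> 1"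
  shows "\<bar>leaky a t - leaky a s\<bar> \<le> \<bar>t - s\<bar>"
proof -
  have "\<bar>a * t - a * s\<bar> = \<bar>a\<bar> * \<bar>t - s\<bar>"
    by (simp add: abs_mult flip: right_diff_distrib)
  also have "\<dots> \<le> \<bar>t - s\<bar>"
    using mult_right_mono[OF assms, of "\<bar>t - s\<bar>"] by simp
  finally have "\<bar>a * t - a * s\<bar> \<le> \<bar>t - s\<bar>" .
  then show ?thesis
    using abs_max_diff_le[of t "a * t" s "a * s"] by (simp add: leaky_def)
qed

lemma matvec_vnorm_le: "vnorm dout (matvec din M u) \<le> frob dout din M * vnorm din u"
proof -
  have row: "\<bar>matvec din M u j\<bar> \<le> L2_set (M j) {1..din} * vnorm din u" for j
  proof -
    have "\<bar>matvec din M u j\<bar> \<le> (\<Sum>k=1..din. \<bar>M j k\<bar> * \<bar>u k\<bar>)"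
      unfolding matvec_def by (rule order_trans[OF sum_abs]) (simp add: abs_mult)
    also have "\<dots> \<le> L2_set (M j) {1..din} * vnorm din u"
      unfolding vnorm_eq_L2_set by (rule L2_set_mult_ineq)
    finally show ?thesis .
  qed
  have "vnorm dout (matvec din M u) \<le> vnorm dout (\<lambda>j. L2_set (M j) {1..din} * vnorm din u)"
    by (rule vnorm_mono_abs) (use row in \<open>simp add: vnorm_nonneg\<close>)
  also have "\<dots> = frob dout din M * vnorm din u"
    by (simp add: frob_eq_L2_set_rows vnorm_eq_L2_set L2_set_left_distrib)
  finally show ?thesis .
qed

lemma affine_diff_le:
  assumes "vnorm din f \<le> 1" and "frob d din W2 \<le> 1"
  shows "vnorm d (\<lambda>j. (matvec din W1 f j + b1 j) - (matvec din W2 g j + b2 j))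
     \<le> frob d din (\<lambda>j k. W1 j k - W2 j k) + vnorm din (\<lambda>k. f k - g k) + vnorm d (\<lambda>j. b1 j - b2 j)"
proof -
  let ?X = "matvec din (\<lambda>j k. W1 j k - W2 j k) f"
  let ?Y = "matvec din W2 (\<lambda>k. f k - g k)"
  have split: "(\<lambda>j. (matvec din W1 f j + b1 j) - (matvec din W2 g j + b2 j))
      = (\<lambda>j. (?X j + ?Y j) + (b1 j - b2 j))"
    by (auto simp: matvec_def sum_subtractf[symmetric] sum.distrib[symmetric] algebra_simps)
  have "vnorm d ?X \<le> frob d din (\<lambda>j k. W1 j k - W2 j k)"
    using matvec_vnorm_le[where M="\<lambda>j k. W1 j k - W2 j k" and u=f]
      mult_left_le[OF assms(1) frob_nonneg] by (rule order_trans)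
  moreover have "vnorm d ?Y \<le> vnorm din (\<lambda>k. f k - g k)"
    using matvec_vnorm_le[where M=W2 and u="\<lambda>k. f k - g k"]
      mult_left_le_one_le[OF vnorm_nonneg frob_nonneg assms(2)] by (rule order_trans)
  ultimately show ?thesis
    unfolding split
    using vnorm_triangle[where d=d and u="\<lambda>j. ?X j + ?Y j" and v="\<lambda>j. b1 j - b2 j"]
      vnorm_triangle[where d=d and u="?X" and v="?Y"]
    by linarith
qed

lemma layer_diff_le:
  assumes "\<bar>a\<bar> \<le> 1" and "vnorm din f \<le> 1" and "frob N din W2 \<le> 1"
  shows "vnorm N (\<lambda>j. layer a din N W1 b1 f j - layer a din N W2 b2 g j)
     \<le> frob N din (\<lambda>j k. W1 j k - W2 j k) + vnorm din (\<lambda>k. f k - g k) + vnorm N (\<lambda>j. b1 j - b2 j)"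
proof -
  have "vnorm N (\<lambda>j. layer a din N W1 b1 f j - layer a din N W2 b2 g j)
     \<le> vnorm N (\<lambda>j. leaky a (matvec din W1 f j + b1 j) - leaky a (matvec din W2 g j + b2 j))"
    unfolding layer_def by (rule proj_ball_nonexpansive)
  also have "\<dots> \<le> vnorm N (\<lambda>j. (matvec din W1 f j + b1 j) - (matvec din W2 g j + b2 j))"
    by (rule vnorm_mono_abs) (simp add: leaky_lipschitz[OF assms(1)])
  also have "\<dots> \<le> frob N din (\<lambda>j k. W1 j k - W2 j k) + vnorm din (\<lambda>k. f k - g k)
       + vnorm N (\<lambda>j. b1 j - b2 j)"
    by (rule affine_diff_le[OF assms(2,3)])
  finally show ?thesis .
qed

lemma feat_vnorm_le:
  assumes "vnorm n x \<le> 1"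
  shows "vnorm (in_dim n N (Suc i)) (feat a n N Ws bs i x) \<le> 1"
proof (cases i)
  case 0
  then show ?thesis using assms by (simp add: in_dim_def)
next
  case (Suc j)
  then show ?thesis by (simp add: in_dim_def layer_def vnorm_proj_ball_le)
qed

lemma feat_diff_le:
  assumes "\<bar>a\<bar> \<le> 1" and "vnorm n x \<le> 1"
    and "\<forall>k\<in>{1..i}. frob N (in_dim n N k) (Ws' k) \<le> 1"
  shows "vnorm (in_dim n N (Suc i)) (\<lambda>j. feat a n N Ws bs i x j - feat a n N Ws' bs' i x j)
    \<le> (\<Sum>k=1..i. frob N (in_dim n N k) (\<lambda>j l. Ws k j l - Ws' k j l) + vnorm N (\<lambda>j. bs k j - bs' k j))"
  using assms(3)
proof (induction i)
  case 0
  then show ?case by (simp add: vnorm_def)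
next
  case (Suc i)
  have out_dim: "in_dim n N (Suc (Suc i)) = N" by (simp add: in_dim_def)
  have "vnorm N (\<lambda>j. feat a n N Ws bs (Suc i) x j - feat a n N Ws' bs' (Suc i) x j)
     \<le> frob N (in_dim n N (Suc i)) (\<lambda>j k. Ws (Suc i) j k - Ws' (Suc i) j k)
       + vnorm (in_dim n N (Suc i)) (\<lambda>k. feat a n N Ws bs i x k - feat a n N Ws' bs' i x k)
       + vnorm N (\<lambda>j. bs (Suc i) j - bs' (Suc i) j)"
    unfolding feat.simps
    by (rule layer_diff_le[OF assms(1) feat_vnorm_le[OF assms(2)]]) (use Suc.prems in auto)
  also have "\<dots> \<le> (\<Sum>k=1..Suc i. frob N (in_dim n N k) (\<lambda>j l. Ws k j l - Ws' k j l)
       + vnorm N (\<lambda>j. bs k j - bs' k j))"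
    using Suc by (simp add: sum.cl_ivl_Suc)
  finally show ?case unfolding out_dim .
qed

lemma label_pairs_abs_sum_le:
  assumes "y \<in> {1..m}"
  shows "(\<Sum>j\<in>{1..m} - {y}. \<bar>u y\<bar> + \<bar>u j\<bar>) \<le> real m * vnorm m u"
proof -
  define S where "S = {1..m} - {y}"
  define g where "g j = (if j = y then real m - 1 else 1)" for j
  have fin: "finite S" and y: "y \<notin> S" and all: "{1..m} = insert y S"
    using assms by (auto simp: S_def)
  have card: "real (card S) = real m - 1"
    using assms by (simp add: S_def of_nat_diff)
  have g_S: "g j = 1" if "j \<in> S" for j
    using that y by (auto simp: g_def)
  have "(\<Sum>j\<in>S. \<bar>u y\<bar> + \<bar>u j\<bar>) = (real m - 1) * \<bar>u y\<bar> + (\<Sum>j\<in>S. \<bar>u j\<bar>)"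
    by (simp add: sum.distrib card)
  also have "\<dots> = \<bar>g y\<bar> * \<bar>u y\<bar> + (\<Sum>j\<in>S. \<bar>g j\<bar> * \<bar>u j\<bar>)"
    using assms by (simp add: g_def[of y] g_S cong: sum.cong_simp)
  also have "\<dots> = (\<Sum>j\<in>{1..m}. \<bar>g j\<bar> * \<bar>u j\<bar>)"
    unfolding all by (simp add: fin y)
  also have "\<dots> \<le> L2_set g {1..m} * vnorm m u"
    unfolding vnorm_eq_L2_set by (rule L2_set_mult_ineq)
  also have "L2_set g {1..m} = sqrt ((real m - 1)\<^sup>2 + (real m - 1))"
    unfolding all using fin y card
    by (simp add: g_def[of y] L2_set_cong[OF refl g_S] L2_set_constant)
  also have "\<dots> \<le> real m"
    by (rule real_sqrt_le_iff[THEN iffD2, of _ "(real m)\<^sup>2", simplified])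
      (simp add: power2_eq_square algebra_simps)
  finally show ?thesis
    unfolding S_def by (simp add: mult_right_mono vnorm_nonneg)
qed

lemma loss_lipschitz:
  assumes "0 \<le> \<alpha>" and "y \<in> {1..m}"
  shows "\<bar>loss m \<alpha> h y - loss m \<alpha> h' y\<bar> \<le> \<alpha> * vnorm m (\<lambda>j. h j - h' j)"
proof -
  define S where "S = {1..m} - {y}"
  define \<delta> where "\<delta> = (\<lambda>j. h j - h' j)"
  have m: "real m > 0" using assms(2) by auto
  have hinge: "\<bar>max 0 (1 - \<alpha> * (h y - h j)) - max 0 (1 - \<alpha> * (h' y - h' j))\<bar>
      \<le> \<alpha> * (\<bar>\<delta> y\<bar> + \<bar>\<delta> j\<bar>)" for j
  proof -
    have "\<bar>max 0 (1 - \<alpha> * (h y - h j)) - max 0 (1 - \<alpha> * (h' y - h' j))\<bar>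
        \<le> \<bar>\<alpha> * (\<delta> j - \<delta> y)\<bar>"
      using abs_max_diff_le[of 0 "1 - \<alpha> * (h y - h j)" 0 "1 - \<alpha> * (h' y - h' j)"]
      by (simp add: \<delta>_def algebra_simps)
    also have "\<dots> \<le> \<alpha> * (\<bar>\<delta> y\<bar> + \<bar>\<delta> j\<bar>)"
      using assms(1) by (simp add: abs_mult mult_left_mono)
    finally show ?thesis .
  qed
  have "\<bar>loss m \<alpha> h y - loss m \<alpha> h' y\<bar>
     = \<bar>\<Sum>j\<in>S. max 0 (1 - \<alpha> * (h y - h j)) - max 0 (1 - \<alpha> * (h' y - h' j))\<bar> / real m"
    by (simp add: loss_def S_def sum_subtractf abs_divide flip: diff_divide_distrib)
  also have "\<dots> \<le> (\<Sum>j\<in>S. \<alpha> * (\<bar>\<delta> y\<bar> + \<bar>\<delta> j\<bar>)) / real m"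
    using m by (intro divide_right_mono order_trans[OF sum_abs] sum_mono hinge) auto
  also have "\<dots> \<le> \<alpha> * (real m * vnorm m \<delta>) / real m"
    unfolding S_def sum_distrib_left[symmetric]
    using assms m label_pairs_abs_sum_le by (intro divide_right_mono mult_left_mono) auto
  finally show ?thesis
    using m by (simp add: \<delta>_def)
qed

lemma sum_le_sqrt_card_mult_L2_set: "sum f A \<le> sqrt (card A) * L2_set f A"
proof -
  have "sum f A \<le> (\<Sum>i\<in>A. \<bar>1\<bar> * \<bar>f i\<bar>)"
    by (intro sum_mono) simp
  also have "\<dots> \<le> L2_set (\<lambda>_. 1) A * L2_set f A"
    by (rule L2_set_mult_ineq)
  finally show ?thesis by (simp add: L2_set_constant)
qed

lemma sum_pairs_le_sqrt_card:
  "(\<Sum>k\<in>A. p k + q k) \<le> sqrt (2 * card A) * sqrt ((\<Sum>k\<in>A. (p k)\<^sup>2) + (\<Sum>k\<in>A. (q k)\<^sup>2))"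
proof -
  have "(\<Sum>k\<in>A. (p k + q k)\<^sup>2) \<le> (\<Sum>k\<in>A. 2 * ((p k)\<^sup>2 + (q k)\<^sup>2))"
  proof (rule sum_mono)
    fix k
    have "0 \<le> (p k - q k)\<^sup>2" by simp
    then show "(p k + q k)\<^sup>2 \<le> 2 * ((p k)\<^sup>2 + (q k)\<^sup>2)"
      by (simp add: power2_eq_square algebra_simps)
  qed
  then have "L2_set (\<lambda>k. p k + q k) A \<le> sqrt 2 * sqrt ((\<Sum>k\<in>A. (p k)\<^sup>2) + (\<Sum>k\<in>A. (q k)\<^sup>2))"
    unfolding L2_set_def real_sqrt_mult[symmetric]
    by (intro real_sqrt_le_mono) (simp add: sum.distrib sum_distrib_left)
  then have "sqrt (card A) * L2_set (\<lambda>k. p k + q k) A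
      \<le> sqrt (card A) * (sqrt 2 * sqrt ((\<Sum>k\<in>A. (p k)\<^sup>2) + (\<Sum>k\<in>A. (q k)\<^sup>2)))"
    by (rule mult_left_mono) simp
  then show ?thesis
    using sum_le_sqrt_card_mult_L2_set[of "\<lambda>k. p k + q k" A]
    by (simp add: real_sqrt_mult mult_ac)
qed

lemma sum_layers_le_sqrt:
  "p0 + q0 + (\<Sum>k=1..K. p k + q k)
     \<le> sqrt (2 * (real K + 1)) * sqrt (p0\<^sup>2 + (\<Sum>k=1..K. (p k)\<^sup>2) + q0\<^sup>2 + (\<Sum>k=1..K. (q k)\<^sup>2))"
proof -
  let ?P = "\<lambda>k. if k = 0 then p0 else p k"
  let ?Q = "\<lambda>k. if k = 0 then q0 else q k"
  have shift: "(\<Sum>k=0..K. f k) = f 0 + (\<Sum>k=1..K. f k)" for f :: "nat \<Rightarrow> real"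
    by (simp add: sum.atLeast_Suc_atMost)
  have drop_if: "(\<Sum>k=1..K. f (?P k) (?Q k)) = (\<Sum>k=1..K. f (p k) (q k))" for f :: "real \<Rightarrow> real \<Rightarrow> real"
    by (rule sum.cong) auto
  show ?thesis
    using sum_pairs_le_sqrt_card[of ?P ?Q "{0..K}"]
    unfolding shift drop_if[of "\<lambda>s t. s + t"] drop_if[of "\<lambda>s t. s\<^sup>2"] drop_if[of "\<lambda>s t. t\<^sup>2"]
    by (simp add: add_ac)
qed

theorem lemmaD1:
  fixes n N K m :: nat and a \<alpha> :: real
    and W W' :: "nat \<Rightarrow> nat \<Rightarrow> real" and b b' :: "nat \<Rightarrow> real"
    and Ws Ws' :: "nat \<Rightarrow> nat \<Rightarrow> nat \<Rightarrow> real" and bs bs' :: "nat \<Rightarrow> nat \<Rightarrow> real"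
    and x :: "nat \<Rightarrow> real" and y :: nat
  assumes "K \<ge> 1" and "N \<ge> 1" and "\<alpha> > 0" and "0 < a" and "a < 1"
    and "frob m N W \<le> 1" and "frob m N W' \<le> 1"
    and "\<forall>i\<in>{1..K}. frob N (in_dim n N i) (Ws i) \<le> 1"
    and "\<forall>i\<in>{1..K}. frob N (in_dim n N i) (Ws' i) \<le> 1"
    and "vnorm n x \<le> 1" and "y \<in> {1..m}"
  shows "\<bar>loss m \<alpha> (net a n N K W b Ws bs x) y - loss m \<alpha> (net a n N K W' b' Ws' bs' x) y\<bar>
         \<le> \<alpha> * sqrt (2 * (real K + 2)) * param_dist n N K m W b Ws bs W' b' Ws' bs'"
proof -
  let ?h = "net a n N K W b Ws bs x" and ?h' = "net a n N K W' b' Ws' bs' x"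
  let ?F = "feat a n N Ws bs K x" and ?F' = "feat a n N Ws' bs' K x"
  let ?dW = "frob m N (\<lambda>j k. W j k - W' j k)" and ?db = "vnorm m (\<lambda>j. b j - b' j)"
  let ?dWs = "\<lambda>k. frob N (in_dim n N k) (\<lambda>j l. Ws k j l - Ws' k j l)"
  let ?dbs = "\<lambda>k. vnorm N (\<lambda>j. bs k j - bs' k j)"
  let ?dist = "param_dist n N K m W b Ws bs W' b' Ws' bs'"
  have out_dim: "in_dim n N (Suc K) = N" using assms(1) by (simp add: in_dim_def)
  have slope: "\<bar>a\<bar> \<le> 1" using assms(4,5) by simp
  have dist: "?dist = sqrt (?dW\<^sup>2 + (\<Sum>k=1..K. (?dWs k)\<^sup>2) + ?db\<^sup>2 + (\<Sum>k=1..K. (?dbs k)\<^sup>2))"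
    by (simp add: param_dist_def frob_sq vnorm_sq)
  have "vnorm m (\<lambda>j. ?h j - ?h' j) \<le> ?dW + vnorm N (\<lambda>j. ?F j - ?F' j) + ?db"
    unfolding net_def using feat_vnorm_le[OF assms(10), of N K] out_dim
    by (intro affine_diff_le assms(7)) simp
  also have "\<dots> \<le> ?dW + ?db + (\<Sum>k=1..K. ?dWs k + ?dbs k)"
    using feat_diff_le[OF slope assms(10) assms(9)] out_dim by simp
  also have "\<dots> \<le> sqrt (2 * (real K + 1)) * ?dist"
    unfolding dist by (rule sum_layers_le_sqrt)
  \<comment> \<open>The argument yields the constant sqrt (2 (K + 1)); the stated one is weaker.\<close>
  also have "\<dots> \<le> sqrt (2 * (real K + 2)) * ?dist"
    by (intro mult_right_mono) (simp_all add: param_dist_def sum_nonneg)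
  finally have net_gap: "vnorm m (\<lambda>j. ?h j - ?h' j) \<le> sqrt (2 * (real K + 2)) * ?dist" .
  have "\<bar>loss m \<alpha> ?h y - loss m \<alpha> ?h' y\<bar> \<le> \<alpha> * vnorm m (\<lambda>j. ?h j - ?h' j)"
    using assms(3,11) by (intro loss_lipschitz) auto
  also have "\<dots> \<le> \<alpha> * (sqrt (2 * (real K + 2)) * ?dist)"
    using assms(3) by (intro mult_left_mono[OF net_gap]) simp
  finally show ?thesis by (simp add: mult.assoc)
qed

end
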